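(* Let $S=s_1,\ldots,s_n$ be a sequence of nonnegative integers, $\gamma>0$, $k$ a positive integer, $\epsilon>0$, and let $L$ be a level sequence. Let $0<\alpha<1$ and $0<\beta<1$, and let $\alpha',\beta'$ satisfy $\alpha^{1+\epsilon}\le\alpha'\le\alpha$ and $\beta^{1+\epsilon}\le\beta'\le\beta$. Then \[ \mathrm{score}_{\mathrm{geo}}(L,S;\alpha',\beta',\gamma)\le(1+\epsilon)\,\mathrm{score}_{\mathrm{geo}}(L,S;\alpha,\beta,\gamma). \]
   Context: A level sequence is $L=\ell_1,\ldots,\ell_n$ of integers with $0\le\ell_i\le k$; set $\ell_0=0$. The penalty is $\mathrm{pen}(x,y)=\max(y-x,0)\,\gamma\log n$. The geometric distribution is $p_{\mathrm{geo}}(s;\lambda)=(1-\lambda)\lambda^s$. $\mathrm{score}_{\mathrm{geo}}(L,S;\alpha,\beta,\gamma)=\sum_{i=1}^n\big[-\log p_{\mathrm{geo}}(s_i;\beta\alpha^{\ell_i})+\mathrm{pen}(\ell_{i-1},\ell_i)\big]$. *)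

theory Defs
  imports Complex_Main
begin

text \<open>Sequences are indexed 1..n as functions on nat; the level sequence
  uses the convention l_0 = 0.\<close>

definition level_seq :: "nat \<Rightarrow> nat \<Rightarrow> (nat \<Rightarrow> nat) \<Rightarrow> bool" where
  "level_seq n k L \<longleftrightarrow> (\<forall>i\<in>{1..n}. L i \<le> k)"

definition lev0 :: "(nat \<Rightarrow> nat) \<Rightarrow> nat \<Rightarrow> nat" where
  "lev0 L i = (if i = 0 then 0 else L i)"

definition pen :: "nat \<Rightarrow> real \<Rightarrow> nat \<Rightarrow> nat \<Rightarrow> real" where
  "pen n \<gamma> x y = max (real y - real x) 0 * \<gamma> * ln (real n)"

definition p_geo :: "nat \<Rightarrow> real \<Rightarrow> real" where
  "p_geo s lam = (1 - lam) * lam ^ s"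

definition score_geo :: "nat \<Rightarrow> (nat \<Rightarrow> nat) \<Rightarrow> (nat \<Rightarrow> nat) \<Rightarrow> real \<Rightarrow> real \<Rightarrow> real \<Rightarrow> real" where
  "score_geo n L S \<alpha> \<beta> \<gamma> =
     (\<Sum>i=1..n. - ln (p_geo (S i) (\<beta> * \<alpha> ^ (L i))) + pen n \<gamma> (lev0 L (i - 1)) (L i))"

end

theory Submission
  imports Defs
begin

text \<open>Writing \<open>\<lambda> = \<beta> \<alpha>\<^sup>\<ell>\<close>, the geometric term is \<open>-ln (1 - \<lambda>) + s (-ln \<lambda>)\<close>.
  The perturbed rate \<open>\<lambda>' = \<beta>' \<alpha>'\<^sup>\<ell>\<close> satisfies \<open>\<lambda>' \<le> \<lambda>\<close>, which can only decrease the first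
  summand, and \<open>-ln \<lambda>' \<le> (1 + \<epsilon>) (-ln \<lambda>)\<close>, since the exponent bounds on \<open>\<alpha>'\<close> and \<open>\<beta>'\<close>
  become linear bounds after taking logarithms. All summands, penalties included,
  are nonnegative, so each grows by at most the factor \<open>1 + \<epsilon>\<close>.\<close>

lemma ln_ge_of_powr_le:
  fixes a a' r :: real
  assumes "0 < a" and "a powr r \<le> a'"
  shows "r * ln a \<le> ln a'"
proof -
  have "0 < a powr r" using assms(1) by simp
  with assms(2) have "ln (a powr r) \<le> ln a'" by (rule ln_mono)
  moreover have "ln (a powr r) = r * ln a" using assms(1) by (simp add: ln_powr)
  ultimately show ?thesis by simp
qed

lemma ln_mult_power_ge:
  fixes a b a' b' c :: real and l :: nat
  assumes "0 < a" "0 < b" "0 < a'" "0 < b'" "0 \<le> c"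
    and "c * ln a \<le> ln a'" and "c * ln b \<le> ln b'"
  shows "c * ln (b * a ^ l) \<le> ln (b' * a' ^ l)"
proof -
  have "real l * (c * ln a) \<le> real l * ln a'"
    using assms(6) by (rule mult_left_mono) simp
  then show ?thesis using assms by (simp add: ln_mult ln_realpow algebra_simps)
qed

lemma neg_ln_p_geo:
  fixes q :: real
  assumes "0 < q" "q < 1"
  shows "- ln (p_geo s q) = - ln (1 - q) + real s * (- ln q)"
  using assms by (simp add: p_geo_def ln_mult ln_realpow)

lemma neg_ln_p_geo_le_scaled:
  fixes q q' c :: real
  assumes "0 < q'" "q' \<le> q" "q < 1" "1 \<le> c"
    and "c * ln q \<le> ln q'"
  shows "- ln (p_geo s q') \<le> c * (- ln (p_geo s q))"
proof -
  have "- ln (1 - q') \<le> - ln (1 - q)" using assms(1-3) by simp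
  also have "\<dots> \<le> c * (- ln (1 - q))"
    using mult_right_mono[OF assms(4), of "- ln (1 - q)"] assms(1-3) by simp
  finally have first: "- ln (1 - q') \<le> c * (- ln (1 - q))" .
  have second: "real s * (- ln q') \<le> real s * (c * (- ln q))"
    using assms(5) by (intro mult_left_mono) simp_all
  show ?thesis
    using first second assms(1-3) by (simp add: neg_ln_p_geo algebra_simps)
qed

text \<open>No hypothesis on \<open>n\<close> is needed because \<open>ln 0 = 0\<close> in Isabelle.\<close>

lemma pen_nonneg:
  assumes "0 \<le> \<gamma>"
  shows "0 \<le> pen n \<gamma> x y"
  using assms by (cases "n = 0") (simp_all add: pen_def)

lemma neg_ln_p_geo_perturbed_le:
  fixes \<alpha> \<beta> \<alpha>' \<beta>' \<epsilon> :: real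
  assumes "0 \<le> \<epsilon>" "0 < \<alpha>" "\<alpha> < 1" "0 < \<beta>" "\<beta> < 1"
    and "\<alpha> powr (1 + \<epsilon>) \<le> \<alpha>'" "\<alpha>' \<le> \<alpha>"
    and "\<beta> powr (1 + \<epsilon>) \<le> \<beta>'" "\<beta>' \<le> \<beta>"
  shows "- ln (p_geo s (\<beta>' * \<alpha>' ^ l)) \<le> (1 + \<epsilon>) * (- ln (p_geo s (\<beta> * \<alpha> ^ l)))"
proof (rule neg_ln_p_geo_le_scaled)
  have "0 < \<alpha> powr (1 + \<epsilon>)" "0 < \<beta> powr (1 + \<epsilon>)" using assms(2,4) by simp_all
  then have "0 < \<alpha>'" "0 < \<beta>'" using assms(6,8) by linarith+
  then show "0 < \<beta>' * \<alpha>' ^ l" by simp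
  show "\<beta>' * \<alpha>' ^ l \<le> \<beta> * \<alpha> ^ l"
    using \<open>0 < \<alpha>'\<close> \<open>0 < \<beta>'\<close> assms by (intro mult_mono power_mono) auto
  have "\<beta> * \<alpha> ^ l \<le> \<beta>" using assms(2-4) by (simp add: mult_left_le power_le_one)
  then show "\<beta> * \<alpha> ^ l < 1" using assms(5) by linarith
  show "(1 + \<epsilon>) * ln (\<beta> * \<alpha> ^ l) \<le> ln (\<beta>' * \<alpha>' ^ l)"
    using \<open>0 < \<alpha>'\<close> \<open>0 < \<beta>'\<close> assms
    by (intro ln_mult_power_ge ln_ge_of_powr_le) simp_all
qed (use assms(1) in simp)

theorem lemma2:
  fixes n k :: nat and S L :: "nat \<Rightarrow> nat"
    and \<gamma> \<epsilon> \<alpha> \<beta> \<alpha>' \<beta>' :: real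
  assumes "\<gamma> > 0" and "k > 0" and "\<epsilon> > 0"
    and "level_seq n k L"
    and "0 < \<alpha>" "\<alpha> < 1" "0 < \<beta>" "\<beta> < 1"
    and "\<alpha> powr (1 + \<epsilon>) \<le> \<alpha>'" "\<alpha>' \<le> \<alpha>"
    and "\<beta> powr (1 + \<epsilon>) \<le> \<beta>'" "\<beta>' \<le> \<beta>"
  shows "score_geo n L S \<alpha>' \<beta>' \<gamma> \<le> (1 + \<epsilon>) * score_geo n L S \<alpha> \<beta> \<gamma>"
proof -
  have "score_geo n L S \<alpha>' \<beta>' \<gamma> \<le>
    (\<Sum>i=1..n. (1 + \<epsilon>) * (- ln (p_geo (S i) (\<beta> * \<alpha> ^ L i)) + pen n \<gamma> (lev0 L (i - 1)) (L i)))"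
    unfolding score_geo_def
  proof (rule sum_mono)
    fix i
    have geo: "- ln (p_geo (S i) (\<beta>' * \<alpha>' ^ L i)) \<le> (1 + \<epsilon>) * (- ln (p_geo (S i) (\<beta> * \<alpha> ^ L i)))"
      using assms(3,5-12) by (intro neg_ln_p_geo_perturbed_le) simp_all
    have pen: "pen n \<gamma> (lev0 L (i - 1)) (L i) \<le> (1 + \<epsilon>) * pen n \<gamma> (lev0 L (i - 1)) (L i)"
      using pen_nonneg[of \<gamma>] assms(1,3) by (simp add: algebra_simps)
    show "- ln (p_geo (S i) (\<beta>' * \<alpha>' ^ L i)) + pen n \<gamma> (lev0 L (i - 1)) (L i)
      \<le> (1 + \<epsilon>) * (- ln (p_geo (S i) (\<beta> * \<alpha> ^ L i)) + pen n \<gamma> (lev0 L (i - 1)) (L i))"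
      using geo pen by (simp only: distrib_left)
  qed
  also have "\<dots> = (1 + \<epsilon>) * score_geo n L S \<alpha> \<beta> \<gamma>"
    by (simp add: score_geo_def sum_distrib_left)
  finally show ?thesis .
qed

end
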